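(* For every integer $n\ge2$, \[ Q_n(x)=\sum_{j=0}^{\lfloor n/2\rfloor}Y(n-j,j)(1+x)^j=\sum_{j=0}^{\lfloor n/2\rfloor}\left(\binom{n-j}{j}+\binom{n-j-1}{j-1}\right)(1+x)^j . \]
   Context: For $n\ge1$ let $\Xi_n$ be the poset on $\{x_1,\dots,x_n\}$ whose cover relations are exactly: $x_2\prec x_1$, $x_3\prec x_2$, and for $3\le i\le n-1$, $x_i\prec x_{i+1}$ if $i$ is odd and $x_{i+1}\prec x_i$ if $i$ is even (so $x_1>x_2>x_3<x_4>x_5<\cdots$). A filter of a poset is an up-closed subset. The matchable Lucas cube $\Omega_n$ is the graph whose vertices are the filters of $\Xi_n$, two filters adjacent iff one is obtained from the other by deleting a single element. $q_{n,k}$ denotes the number of induced subgraphs of $\Omega_n$ isomorphic to the $k$-dimensional hypercube, and $Q_n(x)=\sum_{k\ge0}q_{n,k}x^k$. The Lucas triangle is $Y(n,k)=\binom nk+\binom{n-1}{k-1}$ for $0\le k\le n$ (binomial coefficients with negative lower index are $0$ except that $\binom{-1}{-1}=1$). *)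

theory Defs
  imports Main "HOL-Computational_Algebra.Formal_Power_Series"
begin

text \<open>Cover relations of the poset Xi_n on the elements 1..n (element i stands for x_i).
  A pair (a,b) means x_a is covered by x_b, i.e. x_a \<prec> x_b.\<close>
definition xi_cover :: "nat \<Rightarrow> (nat \<times> nat) set" where
  "xi_cover n =
     {(2,1) | _::unit. 2 \<le> n} \<union> {(3,2) | _::unit. 3 \<le> n}
     \<union> {(i, i+1) | i. 3 \<le> i \<and> i \<le> n - 1 \<and> odd i}
     \<union> {(i+1, i) | i. 3 \<le> i \<and> i \<le> n - 1 \<and> even i}"

definition xi_le :: "nat \<Rightarrow> nat \<Rightarrow> nat \<Rightarrow> bool" where
  "xi_le n a b \<longleftrightarrow> (a, b) \<in> (xi_cover n)\<^sup>*"

definition is_filter :: "nat \<Rightarrow> nat set \<Rightarrow> bool" where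
  "is_filter n F \<longleftrightarrow> F \<subseteq> {1..n} \<and> (\<forall>a\<in>F. \<forall>b\<in>{1..n}. xi_le n a b \<longrightarrow> b \<in> F)"

definition filters :: "nat \<Rightarrow> nat set set" where
  "filters n = {F. is_filter n F}"

text \<open>Two sets are adjacent iff one is obtained from the other by deleting a single element.
  This is the adjacency of Omega_n on filters, and also of the hypercube on Pow {..<k}.\<close>
definition set_adj :: "'a set \<Rightarrow> 'a set \<Rightarrow> bool" where
  "set_adj F G \<longleftrightarrow> (\<exists>x\<in>F. G = F - {x}) \<or> (\<exists>x\<in>G. F = G - {x})"

definition induces_cube :: "nat \<Rightarrow> nat \<Rightarrow> nat set set \<Rightarrow> bool" where
  "induces_cube n k S \<longleftrightarrow> S \<subseteq> filters n \<and>
     (\<exists>f. bij_betw f (Pow {..<k}) S \<and>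
          (\<forall>A\<in>Pow {..<k}. \<forall>B\<in>Pow {..<k}. set_adj A B \<longleftrightarrow> set_adj (f A) (f B)))"

definition q :: "nat \<Rightarrow> nat \<Rightarrow> nat" where
  "q n k = card {S. induces_cube n k S}"

text \<open>Q_n(x) as a formal power series (it is in fact a polynomial).\<close>
definition Qser :: "nat \<Rightarrow> nat fps" where
  "Qser n = Abs_fps (\<lambda>k. of_nat (q n k))"

definition binom :: "int \<Rightarrow> int \<Rightarrow> nat" where
  "binom a b = (if b < 0 then (if a = -1 \<and> b = -1 then 1 else 0)
                else if a < 0 then 0 else nat a choose nat b)"

definition Y :: "nat \<Rightarrow> nat \<Rightarrow> nat" where
  "Y m k = binom (int m) (int k) + binom (int m - 1) (int k - 1)"

end

(*
  An induced k-cube in the graph whose vertices are the filters of a finite poset (adjacent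
  when they differ in one element) is exactly a Boolean interval {G - L..G} with card L = k
  all of whose members are filters, i.e. G is a filter and L is a set of minimal elements
  of G. Hence q(n,k) is the sum over all filters F of (card (minimal F) choose k). As
  F \<mapsto> minimal F is a bijection between filters and antichains, q(n,k) is the sum over j
  of a(n,j) * (j choose k), where a(n,j) is the number of j-element antichains; this is the
  coefficient of x^k in the sum of a(n,j) * (1 + x)^j.

  The antichains of Xi_n are the subsets of {1..n} without two consecutive elements that do
  not contain both 1 and 3. Splitting on whether n + 2 belongs to the antichain gives
  a(n+2,j+1) = a(n+1,j+1) + a(n,j) for n >= 2, the Pascal recurrence of the Lucas triangle,
  and checking n = 2, 3 directly gives a(n,j) = Y(n-j,j), which vanishes for j > n div 2.
*)

theory Submission
  imports Defs
begin

section \<open>Induced hypercubes in families of sets\<close>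

definition induced_cube :: "'a set set \<Rightarrow> nat \<Rightarrow> 'a set set \<Rightarrow> bool" where
  "induced_cube \<F> k S \<longleftrightarrow> S \<subseteq> \<F> \<and>
     (\<exists>f. bij_betw f (Pow {..<k}) S \<and>
          (\<forall>A\<in>Pow {..<k}. \<forall>B\<in>Pow {..<k}. set_adj A B \<longleftrightarrow> set_adj (f A) (f B)))"

lemma set_adj_iff_card_sym_diff: "set_adj X V \<longleftrightarrow> card (sym_diff X V) = 1"
proof
  assume "set_adj X V"
  then consider x where "x \<in> X" "V = X - {x}" | x where "x \<in> V" "X = V - {x}"
    unfolding set_adj_def by blast
  then have "\<exists>x. sym_diff X V = {x}" by cases auto
  then show "card (sym_diff X V) = 1" by auto
next
  assume "card (sym_diff X V) = 1"
  then obtain u where u: "sym_diff X V = {u}" by (rule card_1_singletonE)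
  show "set_adj X V"
  proof (cases "u \<in> X")
    case True
    with u have "V = X - {u}" unfolding set_eq_iff by (metis Diff_iff Un_iff singleton_iff)
    with True show ?thesis unfolding set_adj_def by blast
  next
    case False
    with u have "u \<in> V \<and> X = V - {u}" unfolding set_eq_iff by (metis Diff_iff Un_iff singleton_iff)
    then show ?thesis unfolding set_adj_def by blast
  qed
qed

lemma set_adj_sym_diff_left: "set_adj (sym_diff Z X) (sym_diff Z V) \<longleftrightarrow> set_adj X V"
proof -
  have "sym_diff (sym_diff Z X) (sym_diff Z V) = sym_diff X V" by auto
  then show ?thesis by (simp add: set_adj_iff_card_sym_diff)
qed

lemma set_adj_Diff_left:
  assumes "X \<subseteq> G" "V \<subseteq> G"
  shows "set_adj (G - X) (G - V) \<longleftrightarrow> set_adj X V"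
proof -
  have "sym_diff (G - X) (G - V) = sym_diff X V" using assms by auto
  then show ?thesis by (simp add: set_adj_iff_card_sym_diff)
qed

lemma set_adj_image:
  assumes "inj_on g (X \<union> V)"
  shows "set_adj (g ` X) (g ` V) \<longleftrightarrow> set_adj X V"
proof -
  have "sym_diff (g ` X) (g ` V) = g ` sym_diff X V"
    using assms unfolding inj_on_def by auto
  moreover have "inj_on g (sym_diff X V)" using assms by (rule inj_on_subset) auto
  ultimately show ?thesis by (simp add: set_adj_iff_card_sym_diff card_image)
qed

lemma set_adj_insert_cases:
  assumes "set_adj (insert a Z) V" "a \<notin> Z"
  obtains "V = Z"
    | x where "x \<in> Z" "V = insert a (Z - {x})"
    | x where "x \<notin> insert a Z" "V = insert x (insert a Z)"
proof -
  from assms(1) consider x where "x \<in> insert a Z" "V = insert a Z - {x}"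
    | x where "x \<in> V" "insert a Z = V - {x}"
    unfolding set_adj_def by blast
  then show ?thesis
  proof cases
    case (1 x)
    show ?thesis
    proof (cases "x = a")
      case True
      with 1 assms(2) have "V = Z" by simp
      then show ?thesis by (rule that(1))
    next
      case False
      with 1 have "x \<in> Z" "V = insert a (Z - {x})" by auto
      then show ?thesis by (rule that(2))
    qed
  next
    case (2 x)
    then have "x \<notin> insert a Z" "V = insert x (insert a Z)" by auto
    then show ?thesis by (rule that(3))
  qed
qed

lemma set_adj_insert_insert:
  assumes adj_a: "set_adj (insert a Z) V" and adj_b: "set_adj (insert b Z) V"
    and "a \<notin> Z" "b \<notin> Z" "a \<noteq> b" "V \<noteq> Z"
  shows "V = insert a (insert b Z)"
proof -
  have "b \<in> V"
    by (rule set_adj_insert_cases[OF adj_b \<open>b \<notin> Z\<close>]) (use \<open>V \<noteq> Z\<close> in auto)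
  show ?thesis
    by (rule set_adj_insert_cases[OF adj_a \<open>a \<notin> Z\<close>]) (use assms \<open>b \<in> V\<close> in auto)
qed

lemma set_adj_image_Diff_Diff:
  assumes inj: "inj_on l A" and "i \<in> A" "j \<in> A" "i \<noteq> j"
    and "set_adj (l ` (A - {i})) V" "set_adj (l ` (A - {j})) V" "V \<noteq> l ` (A - {i, j})"
  shows "V = l ` A"
proof -
  define W where "W = l ` (A - {i, j})"
  have "l ` (A - {i}) = insert (l j) W" "l ` (A - {j}) = insert (l i) W"
    "l ` A = insert (l j) (insert (l i) W)"
    using assms(2-4) by (auto simp: W_def)
  moreover have "l i \<notin> W" "l j \<notin> W" "l j \<noteq> l i"
    using assms(2-4) by (auto simp: W_def inj_on_image_mem_iff[OF inj] inj_on_eq_iff[OF inj])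
  ultimately show ?thesis
    using set_adj_insert_insert[of "l j" W V "l i"] assms(5-7) by (simp add: W_def)
qed

lemma empty_singleton_or_two_elements:
  assumes "finite A"
  obtains "A = {}" | i where "A = {i}" | i j where "i \<in> A" "j \<in> A" "i \<noteq> j"
proof (cases "card A \<le> 1")
  case True
  with assms that(1,2) show ?thesis
    by (metis One_nat_def card_0_eq card_1_singleton_iff le_Suc_eq le_zero_eq)
next
  case False
  with assms that(3) show ?thesis by (metis One_nat_def card_le_Suc0_iff_eq)
qed

lemma adjacency_preserving_cube_map_normal_form:
  assumes "finite K" and inj: "inj_on f (Pow K)" and f_empty: "f {} = {}"
    and adj: "\<And>A B. A \<subseteq> K \<Longrightarrow> B \<subseteq> K \<Longrightarrow> set_adj A B \<Longrightarrow> set_adj (f A) (f B)"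
  obtains l where "inj_on l K" "\<And>A. A \<subseteq> K \<Longrightarrow> f A = l ` A"
proof -
  have "\<exists>u. f {i} = {u}" if "i \<in> K" for i
  proof -
    have "set_adj {} {i}" unfolding set_adj_def by blast
    with adj[of "{}" "{i}"] that have "card (f {i}) = 1"
      by (simp add: f_empty set_adj_iff_card_sym_diff)
    then show ?thesis by (simp add: card_1_singleton_iff)
  qed
  then obtain l where l: "\<And>i. i \<in> K \<Longrightarrow> f {i} = {l i}" by metis
  have inj_l: "inj_on l K"
  proof (rule inj_onI)
    fix i j assume "i \<in> K" "j \<in> K" "l i = l j"
    then have "f {i} = f {j}" by (simp add: l)
    from inj_onD[OF inj this] \<open>i \<in> K\<close> \<open>j \<in> K\<close> have "{i} = {j}" by simp
    then show "i = j" by simp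
  qed
  have "f A = l ` A" if "A \<subseteq> K" for A
    using finite_subset[OF that \<open>finite K\<close>] that
  proof (induction A rule: finite_psubset_induct)
    case (psubset A)
    show ?case
    proof (cases rule: empty_singleton_or_two_elements[OF psubset.hyps(1)])
      case (3 i j)
      have K: "A - {i} \<subseteq> K" "A - {j} \<subseteq> K" "A - {i, j} \<subseteq> K"
        using psubset.prems by auto
      have IH: "f (A - {i}) = l ` (A - {i})" "f (A - {j}) = l ` (A - {j})"
        "f (A - {i, j}) = l ` (A - {i, j})"
        using 3 K by (auto intro!: psubset.IH)
      have "set_adj (A - {i}) A" "set_adj (A - {j}) A"
        using 3 unfolding set_adj_def by blast+
      then have "set_adj (l ` (A - {i})) (f A)" "set_adj (l ` (A - {j})) (f A)"
        using adj[OF K(1) psubset.prems] adj[OF K(2) psubset.prems] unfolding IH by blast+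
      moreover have "f A \<noteq> l ` (A - {i, j})"
      proof
        assume "f A = l ` (A - {i, j})"
        with inj_onD[OF inj] K(3) psubset.prems IH(3) have "A = A - {i, j}" by simp
        with 3 show False by blast
      qed
      ultimately show ?thesis
        using set_adj_image_Diff_Diff[OF inj_on_subset[OF inj_l psubset.prems] 3] by blast
    next
      case 1
      then show ?thesis by (simp add: f_empty)
    next
      case (2 i)
      then show ?thesis using l psubset.prems by simp
    qed
  qed
  with inj_l show ?thesis by (rule that)
qed

lemma sym_diff_image_Pow: "(\<lambda>C. sym_diff X C) ` Pow L = {X - L..X \<union> L}"
proof (intro set_eqI iffI)
  fix V assume "V \<in> (\<lambda>C. sym_diff X C) ` Pow L"
  then obtain C where "C \<subseteq> L" "V = sym_diff X C" by blast
  then show "V \<in> {X - L..X \<union> L}" by auto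
next
  fix V assume V: "V \<in> {X - L..X \<union> L}"
  have "V = sym_diff X (sym_diff X V)" by auto
  moreover have "sym_diff X V \<subseteq> L" using V by auto
  ultimately show "V \<in> (\<lambda>C. sym_diff X C) ` Pow L" by blast
qed

lemma bij_betw_Diff_Pow:
  assumes "L \<subseteq> G"
  shows "bij_betw (\<lambda>B. G - B) (Pow L) {G - L..G}"
  by (rule bij_betw_byWitness[where f' = "\<lambda>X. G - X"]) (use assms in auto)

lemma induced_cube_imp_interval:
  assumes "induced_cube \<F> k S"
  obtains G L where "L \<subseteq> G" "finite L" "card L = k" "S = {G - L..G}"
proof -
  from assms obtain f where bij: "bij_betw f (Pow {..<k}) S"
    and adj: "\<forall>A\<in>Pow {..<k}. \<forall>B\<in>Pow {..<k}. set_adj A B \<longleftrightarrow> set_adj (f A) (f B)"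
    unfolding induced_cube_def by blast
  define X where "X = f {}"
  define g where "g A = sym_diff X (f A)" for A
  have "inj_on g (Pow {..<k})"
  proof (rule inj_onI)
    fix A B assume "A \<in> Pow {..<k}" "B \<in> Pow {..<k}" "g A = g B"
    moreover from \<open>g A = g B\<close> have "f A = f B" unfolding g_def set_eq_iff by blast
    ultimately show "A = B" using bij_betw_imp_inj_on[OF bij] by (simp add: inj_on_eq_iff)
  qed
  moreover have "g {} = {}" by (simp add: g_def X_def)
  moreover have "set_adj (g A) (g B)" if "A \<subseteq> {..<k}" "B \<subseteq> {..<k}" "set_adj A B" for A B
    using adj that by (simp add: g_def set_adj_sym_diff_left)
  ultimately obtain l where inj_l: "inj_on l {..<k}" and g: "\<And>A. A \<subseteq> {..<k} \<Longrightarrow> g A = l ` A"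
    using adjacency_preserving_cube_map_normal_form[of "{..<k}" g] by blast
  define L where "L = l ` {..<k}"
  have "f A = sym_diff X (l ` A)" if "A \<subseteq> {..<k}" for A
    using g[OF that] unfolding g_def set_eq_iff by blast
  then have "S = (\<lambda>C. sym_diff X C) ` (image l ` Pow {..<k})"
    using bij_betw_imp_surj_on[OF bij] by (force simp: image_image)
  also have "\<dots> = {X - L..X \<union> L}"
    by (simp add: image_Pow_surj L_def sym_diff_image_Pow)
  also have "X - L = (X \<union> L) - L" by blast
  finally have "S = {(X \<union> L) - L..X \<union> L}" .
  moreover have "card L = k" using inj_l by (simp add: L_def card_image)
  ultimately show ?thesis using that[of L "X \<union> L"] by (simp add: L_def)
qed

lemma interval_induced_cube:
  assumes "L \<subseteq> G" "finite L" "card L = k" "{G - L..G} \<subseteq> \<F>"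
  shows "induced_cube \<F> k {G - L..G}"
proof -
  obtain g where g: "bij_betw g {..<k} L"
    using ex_bij_betw_nat_finite[OF \<open>finite L\<close>] \<open>card L = k\<close> by (auto simp: atLeast0LessThan)
  define f where "f A = G - g ` A" for A
  have "bij_betw f (Pow {..<k}) {G - L..G}"
    unfolding f_def using bij_betw_trans[OF bij_betw_Pow[OF g] bij_betw_Diff_Pow[OF \<open>L \<subseteq> G\<close>]]
    by (simp add: comp_def)
  moreover have "set_adj A B \<longleftrightarrow> set_adj (f A) (f B)" if "A \<subseteq> {..<k}" "B \<subseteq> {..<k}" for A B
  proof -
    have "g ` A \<subseteq> G" "g ` B \<subseteq> G" "inj_on g (A \<union> B)"
      using that g assms(1) by (auto simp: bij_betw_def intro: inj_on_subset)
    then show ?thesis by (simp add: f_def set_adj_Diff_left set_adj_image)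
  qed
  ultimately show ?thesis using assms(4) unfolding induced_cube_def by blast
qed

lemma interval_Diff_eq_iff:
  assumes "L \<subseteq> G" "L' \<subseteq> G'"
  shows "{G - L..G} = {G' - L'..G'} \<longleftrightarrow> G = G' \<and> L = L'"
  using assms by simp (metis double_diff order_refl)

lemma card_induced_cubes:
  "card {S. induced_cube \<F> k S} = card {(G, L). L \<subseteq> G \<and> finite L \<and> card L = k \<and> {G - L..G} \<subseteq> \<F>}"
proof -
  let ?P = "{(G, L). L \<subseteq> G \<and> finite L \<and> card L = k \<and> {G - L..G} \<subseteq> \<F>}"
  have "{S. induced_cube \<F> k S} = (\<lambda>(G, L). {G - L..G}) ` ?P"
  proof (intro set_eqI iffI)
    fix S assume "S \<in> {S. induced_cube \<F> k S}"
    then have "induced_cube \<F> k S" by simp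
    moreover from this have "S \<subseteq> \<F>" by (simp add: induced_cube_def)
    ultimately show "S \<in> (\<lambda>(G, L). {G - L..G}) ` ?P"
      by (elim induced_cube_imp_interval) force
  qed (auto intro: interval_induced_cube)
  moreover have "inj_on (\<lambda>(G, L). {G - L..G}) ?P"
    unfolding inj_on_def by (auto simp del: Icc_eq_Icc simp: interval_Diff_eq_iff)
  ultimately show ?thesis by (simp add: card_image)
qed

section \<open>Filters and antichains of a finite poset\<close>

locale finite_poset =
  fixes U :: "'a set" and le :: "'a \<Rightarrow> 'a \<Rightarrow> bool" (infix "\<preceq>" 50)
  assumes finite_carrier: "finite U"
    and reflexive: "a \<in> U \<Longrightarrow> a \<preceq> a"
    and transitive: "a \<in> U \<Longrightarrow> b \<in> U \<Longrightarrow> c \<in> U \<Longrightarrow> a \<preceq> b \<Longrightarrow> b \<preceq> c \<Longrightarrow> a \<preceq> c"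
    and antisymmetric: "a \<in> U \<Longrightarrow> b \<in> U \<Longrightarrow> a \<preceq> b \<Longrightarrow> b \<preceq> a \<Longrightarrow> a = b"
begin

definition up_closed :: "'a set \<Rightarrow> bool" where
  "up_closed F \<longleftrightarrow> F \<subseteq> U \<and> (\<forall>a\<in>F. \<forall>b\<in>U. a \<preceq> b \<longrightarrow> b \<in> F)"

definition minimal :: "'a set \<Rightarrow> 'a set" where
  "minimal F = {a \<in> F. \<forall>c\<in>F. c \<preceq> a \<longrightarrow> c = a}"

definition antichain :: "'a set \<Rightarrow> bool" where
  "antichain A \<longleftrightarrow> A \<subseteq> U \<and> (\<forall>a\<in>A. \<forall>b\<in>A. a \<preceq> b \<longrightarrow> a = b)"

definition up_closure :: "'a set \<Rightarrow> 'a set" where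
  "up_closure A = {b \<in> U. \<exists>a\<in>A. a \<preceq> b}"

lemma minimal_subset: "minimal F \<subseteq> F"
  unfolding minimal_def by blast

lemma interval_subset_up_closed_iff:
  assumes "L \<subseteq> G"
  shows "{G - L..G} \<subseteq> Collect up_closed \<longleftrightarrow> up_closed G \<and> L \<subseteq> minimal G"
proof
  assume sub: "{G - L..G} \<subseteq> Collect up_closed"
  with assms have G: "up_closed G" by auto
  have "a \<in> minimal G" if "a \<in> L" for a
  proof -
    have "G - {a} \<in> {G - L..G}" using \<open>a \<in> L\<close> by auto
    with sub have up: "up_closed (G - {a})" by blast
    have "c = a" if "c \<in> G" "c \<preceq> a" for c
    proof (rule ccontr)
      assume "c \<noteq> a"
      moreover have "a \<in> U" using G \<open>a \<in> L\<close> assms unfolding up_closed_def by blast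
      ultimately have "a \<in> G - {a}" using up that unfolding up_closed_def by blast
      then show False by blast
    qed
    with \<open>a \<in> L\<close> assms show ?thesis unfolding minimal_def by blast
  qed
  with G show "up_closed G \<and> L \<subseteq> minimal G" by blast
next
  assume G: "up_closed G \<and> L \<subseteq> minimal G"
  show "{G - L..G} \<subseteq> Collect up_closed"
  proof
    fix X assume "X \<in> {G - L..G}"
    then have X: "G - L \<subseteq> X" "X \<subseteq> G" by simp_all
    have "b \<in> X" if "a \<in> X" "b \<in> U" "a \<preceq> b" for a b
    proof (rule ccontr)
      assume "b \<notin> X"
      moreover from X G that have "a \<in> G" "b \<in> G" unfolding up_closed_def by auto
      ultimately have "b \<in> minimal G" using X G by blast
      with \<open>a \<in> G\<close> \<open>a \<preceq> b\<close> have "a = b" unfolding minimal_def by blast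
      with \<open>a \<in> X\<close> \<open>b \<notin> X\<close> show False by blast
    qed
    with X G show "X \<in> Collect up_closed" unfolding up_closed_def by auto
  qed
qed

lemma exists_minimal_below:
  assumes "F \<subseteq> U" "b \<in> F"
  shows "\<exists>a\<in>minimal F. a \<preceq> b"
  using assms(2)
proof (induction "card {c \<in> F. c \<preceq> b}" arbitrary: b rule: less_induct)
  case less
  show ?case
  proof (cases "b \<in> minimal F")
    case True
    with less.prems assms(1) show ?thesis using reflexive by blast
  next
    case False
    with less.prems obtain c where c: "c \<in> F" "c \<preceq> b" "c \<noteq> b"
      unfolding minimal_def by blast
    have "\<not> b \<preceq> c" using c less.prems assms(1) antisymmetric by blast
    then have "b \<notin> {x \<in> F. x \<preceq> c}" by blast
    moreover have "b \<in> {x \<in> F. x \<preceq> b}" using less.prems assms(1) reflexive by blast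
    moreover have "{x \<in> F. x \<preceq> c} \<subseteq> {x \<in> F. x \<preceq> b}"
      using c less.prems assms(1) by (blast intro: transitive)
    ultimately have "{x \<in> F. x \<preceq> c} \<subset> {x \<in> F. x \<preceq> b}" by blast
    then have "card {x \<in> F. x \<preceq> c} < card {x \<in> F. x \<preceq> b}"
      using finite_subset[OF assms(1) finite_carrier] by (intro psubset_card_mono) auto
    with less.hyps c(1) obtain a where "a \<in> minimal F" "a \<preceq> c" by blast
    with c less.prems assms(1) show ?thesis using minimal_subset by (blast intro: transitive)
  qed
qed

lemma up_closure_minimal:
  assumes "up_closed F"
  shows "up_closure (minimal F) = F"
proof (intro set_eqI iffI)
  fix b assume "b \<in> up_closure (minimal F)"
  then obtain a where "b \<in> U" "a \<in> F" "a \<preceq> b"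
    unfolding up_closure_def using minimal_subset by blast
  with assms show "b \<in> F" unfolding up_closed_def by blast
next
  fix b assume "b \<in> F"
  moreover from assms have "F \<subseteq> U" by (simp add: up_closed_def)
  ultimately show "b \<in> up_closure (minimal F)"
    unfolding up_closure_def using exists_minimal_below by blast
qed

lemma up_closed_up_closure: "A \<subseteq> U \<Longrightarrow> up_closed (up_closure A)"
  unfolding up_closed_def up_closure_def by (blast intro: transitive)

lemma antichain_minimal: "F \<subseteq> U \<Longrightarrow> antichain (minimal F)"
  unfolding antichain_def minimal_def by blast

lemma minimal_up_closure:
  assumes "antichain A"
  shows "minimal (up_closure A) = A"
proof (intro set_eqI iffI)
  fix a assume a: "a \<in> minimal (up_closure A)"
  then obtain a' where "a' \<in> A" "a' \<preceq> a"
    unfolding minimal_def up_closure_def by blast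
  moreover from this assms have "a' \<in> up_closure A"
    unfolding antichain_def up_closure_def using reflexive by blast
  ultimately show "a \<in> A" using a unfolding minimal_def by blast
next
  fix a assume "a \<in> A"
  with assms have "a \<in> U" unfolding antichain_def by blast
  have "c = a" if "c \<in> up_closure A" "c \<preceq> a" for c
  proof -
    from that obtain a' where "a' \<in> A" "a' \<preceq> c" "c \<in> U"
      unfolding up_closure_def by blast
    with \<open>c \<preceq> a\<close> \<open>a \<in> U\<close> assms have "a' \<preceq> a" "a' \<in> U"
      unfolding antichain_def by (blast intro: transitive)+
    with \<open>a \<in> A\<close> \<open>a' \<in> A\<close> assms have "a' = a" unfolding antichain_def by blast
    with \<open>a' \<preceq> c\<close> \<open>c \<preceq> a\<close> \<open>c \<in> U\<close> \<open>a \<in> U\<close> show "c = a" by (blast intro: antisymmetric)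
  qed
  with \<open>a \<in> A\<close> \<open>a \<in> U\<close> show "a \<in> minimal (up_closure A)"
    unfolding minimal_def up_closure_def using reflexive by blast
qed

lemma bij_betw_minimal: "bij_betw minimal (Collect up_closed) (Collect antichain)"
proof (rule bij_betw_byWitness[where f' = up_closure])
  show "minimal ` Collect up_closed \<subseteq> Collect antichain"
    by (auto simp: up_closed_def intro: antichain_minimal)
  show "up_closure ` Collect antichain \<subseteq> Collect up_closed"
    by (auto simp: antichain_def intro: up_closed_up_closure)
qed (simp_all add: up_closure_minimal minimal_up_closure)

lemma finite_up_closed: "finite (Collect up_closed)"
  by (rule finite_subset[of _ "Pow U"]) (auto simp: up_closed_def finite_carrier)

lemma finite_antichain: "finite (Collect antichain)"
  by (rule finite_subset[of _ "Pow U"]) (auto simp: antichain_def finite_carrier)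

lemma card_induced_cubes_up_closed:
  "card {S. induced_cube (Collect up_closed) k S} = (\<Sum>F | up_closed F. card (minimal F) choose k)"
proof -
  have fin_minimal: "finite (minimal F)" if "up_closed F" for F
    using that minimal_subset finite_carrier unfolding up_closed_def by (meson finite_subset)
  have "(L \<subseteq> G \<and> finite L \<and> card L = k \<and> {G - L..G} \<subseteq> Collect up_closed)
      \<longleftrightarrow> (up_closed G \<and> L \<subseteq> minimal G \<and> card L = k)" for G L
    using interval_subset_up_closed_iff[of L G] minimal_subset[of G] fin_minimal[of G]
    by (meson finite_subset order_trans)
  then have "{(G, L). L \<subseteq> G \<and> finite L \<and> card L = k \<and> {G - L..G} \<subseteq> Collect up_closed}
      = Sigma (Collect up_closed) (\<lambda>G. {L. L \<subseteq> minimal G \<and> card L = k})"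
    by auto
  then have "card {S. induced_cube (Collect up_closed) k S}
      = card (Sigma (Collect up_closed) (\<lambda>G. {L. L \<subseteq> minimal G \<and> card L = k}))"
    by (simp add: card_induced_cubes)
  also have "\<dots> = (\<Sum>F | up_closed F. card {L. L \<subseteq> minimal F \<and> card L = k})"
    using finite_up_closed fin_minimal by (simp add: card_SigmaI)
  also have "\<dots> = (\<Sum>F | up_closed F. card (minimal F) choose k)"
    using fin_minimal by (simp add: n_subsets)
  finally show ?thesis .
qed

theorem card_induced_cubes_up_closed_antichains:
  "card {S. induced_cube (Collect up_closed) k S}
     = (\<Sum>j\<le>card U. card {A. antichain A \<and> card A = j} * (j choose k))"
proof -
  have "card {S. induced_cube (Collect up_closed) k S} = (\<Sum>A | antichain A. card A choose k)"
    using card_induced_cubes_up_closed sum.reindex_bij_betw[OF bij_betw_minimal] by simp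
  also have "\<dots> = (\<Sum>j\<le>card U. \<Sum>A \<in> {A \<in> Collect antichain. card A = j}. card A choose k)"
  proof (rule sum.group[symmetric])
    show "card ` Collect antichain \<subseteq> {..card U}"
      using card_mono[OF finite_carrier] by (auto simp: antichain_def)
  qed (simp_all add: finite_antichain)
  also have "\<dots> = (\<Sum>j\<le>card U. \<Sum>A | antichain A \<and> card A = j. j choose k)"
    by (intro sum.cong refl) auto
  also have "\<dots> = (\<Sum>j\<le>card U. card {A. antichain A \<and> card A = j} * (j choose k))"
    by simp
  finally show ?thesis .
qed

end

section \<open>The poset Xi_n\<close>

lemma xi_cover_iff:
  "(a, b) \<in> xi_cover n \<longleftrightarrow>
     (a = 2 \<and> b = 1 \<and> 2 \<le> n) \<or> (a = 3 \<and> b = 2 \<and> 3 \<le> n) \<or>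
     (odd a \<and> 3 \<le> a \<and> b = a + 1 \<and> b \<le> n) \<or> (odd a \<and> 5 \<le> a \<and> a = b + 1 \<and> a \<le> n)"
  (is "?cover \<longleftrightarrow> ?cases")
proof
  show ?cases if ?cover
    using that unfolding xi_cover_def by (elim UnE; clarsimp; presburger)
  show ?cover if ?cases
    using that unfolding xi_cover_def by (elim disjE; clarsimp; presburger)
qed

lemma xi_le_iff: "xi_le n a b \<longleftrightarrow> a = b \<or> (a, b) \<in> xi_cover n \<or> (a = 3 \<and> b = 1 \<and> 3 \<le> n)"
  (is "_ \<longleftrightarrow> ?cases a b")
proof
  assume "xi_le n a b"
  then show "?cases a b"
    unfolding xi_le_def
  proof (induction rule: rtrancl_induct)
    case (step c d)
    from step.IH consider "a = c" | "(a, c) \<in> xi_cover n" | "a = 3" "c = 1" "3 \<le> n" by blast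
    then show ?case
    proof cases
      case 2
      with step.hyps(2) have "a = 3 \<and> d = 1 \<and> 3 \<le> n" unfolding xi_cover_iff by presburger
      then show ?thesis by simp
    qed (use step.hyps(2) in \<open>simp_all add: xi_cover_iff\<close>)
  qed simp
next
  have "(3, 1) \<in> (xi_cover n)\<^sup>*" if "3 \<le> n"
  proof -
    from that have "(3, 2) \<in> xi_cover n" "(2, 1) \<in> xi_cover n" by (simp_all add: xi_cover_iff)
    then show ?thesis by (meson converse_rtrancl_into_rtrancl r_into_rtrancl)
  qed
  then show "?cases a b \<Longrightarrow> xi_le n a b"
    unfolding xi_le_def by auto
qed

lemma xi_le_antisym:
  assumes "xi_le n a b" "xi_le n b a"
  shows "a = b"
proof (rule ccontr)
  assume "a \<noteq> b"
  \<comment> \<open>Xi_n has three levels: the odd elements from 3 on, the even elements, and 1 on top.\<close>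
  define rank :: "nat \<Rightarrow> nat" where "rank x = (if x = 1 then 2 else if even x then 1 else 0)" for x
  have "rank x < rank y" if "xi_le n x y" "x \<noteq> y" for x y
  proof -
    from that consider "(x, y) \<in> xi_cover n" | "x = 3" "y = 1" unfolding xi_le_iff by blast
    then show ?thesis
    proof cases
      case 1
      then show ?thesis unfolding xi_cover_iff rank_def by (elim disjE conjE) auto
    qed (simp add: rank_def)
  qed
  with assms \<open>a \<noteq> b\<close> have "rank a < rank b" "rank b < rank a" by auto
  then show False by simp
qed

lemma xi_cover_consecutive: "(a, b) \<in> xi_cover n \<Longrightarrow> b = a + 1 \<or> a = b + 1"
  unfolding xi_cover_iff by (elim disjE conjE) simp_all

lemma xi_consecutive_comparable:
  assumes "1 \<le> a" "a + 1 \<le> n"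
  shows "xi_le n a (a + 1) \<or> xi_le n (a + 1) a"
proof -
  have "(a, a + 1) \<in> xi_cover n \<or> (a + 1, a) \<in> xi_cover n"
  proof -
    have "a = 1 \<or> a = 2 \<or> odd a \<and> 3 \<le> a \<or> even a \<and> 4 \<le> a"
      using \<open>1 \<le> a\<close> by presburger
    then consider "a = 1" | "a = 2" | "odd a" "3 \<le> a" | "even a" "4 \<le> a" by blast
    then show ?thesis by cases (use \<open>a + 1 \<le> n\<close> in \<open>simp_all add: xi_cover_iff\<close>)
  qed
  then show ?thesis by (auto simp: xi_le_iff)
qed

lemma xi_comparable_iff:
  assumes "a \<in> {1..n}" "b \<in> {1..n}" "a \<noteq> b"
  shows "xi_le n a b \<or> xi_le n b a \<longleftrightarrow> b = a + 1 \<or> a = b + 1 \<or> {a, b} = {1, 3}"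
proof
  assume "xi_le n a b \<or> xi_le n b a"
  with \<open>a \<noteq> b\<close> show "b = a + 1 \<or> a = b + 1 \<or> {a, b} = {1, 3}"
    unfolding xi_le_iff by (auto dest: xi_cover_consecutive)
next
  assume "b = a + 1 \<or> a = b + 1 \<or> {a, b} = {1, 3}"
  with assms show "xi_le n a b \<or> xi_le n b a"
    using xi_consecutive_comparable[of a n] xi_consecutive_comparable[of b n]
    by (auto simp: xi_le_iff doubleton_eq_iff)
qed

definition xi_indep :: "nat \<Rightarrow> nat set \<Rightarrow> bool" where
  "xi_indep n A \<longleftrightarrow> A \<subseteq> {1..n} \<and> (\<forall>a\<in>A. a + 1 \<notin> A) \<and> \<not> {1, 3} \<subseteq> A"

lemma xi_antichain_iff_indep:
  "A \<subseteq> {1..n} \<and> (\<forall>a\<in>A. \<forall>b\<in>A. xi_le n a b \<longrightarrow> a = b) \<longleftrightarrow> xi_indep n A"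
proof (intro iffI conjI)
  assume A: "A \<subseteq> {1..n} \<and> (\<forall>a\<in>A. \<forall>b\<in>A. xi_le n a b \<longrightarrow> a = b)"
  have incomparable: "\<not> (xi_le n a b \<or> xi_le n b a)" if "a \<in> A" "b \<in> A" "a \<noteq> b" for a b
    using A that by blast
  have "a + 1 \<notin> A" if "a \<in> A" for a
  proof
    assume "a + 1 \<in> A"
    moreover from this A that have "a \<in> {1..n}" "a + 1 \<in> {1..n}" by blast+
    ultimately show False
      using incomparable[of a "a + 1"] xi_comparable_iff[of a n "a + 1"] that by simp
  qed
  moreover have "\<not> {1, 3} \<subseteq> A"
  proof
    assume "{1, 3} \<subseteq> A"
    moreover from this A have "1 \<in> {1..n}" "3 \<in> {1..n}" by blast+
    ultimately show False using incomparable[of 1 3] xi_comparable_iff[of 1 n 3] by simp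
  qed
  ultimately show "xi_indep n A" using A unfolding xi_indep_def by blast
next
  assume A: "xi_indep n A"
  then show "A \<subseteq> {1..n}" unfolding xi_indep_def by blast
  show "\<forall>a\<in>A. \<forall>b\<in>A. xi_le n a b \<longrightarrow> a = b"
  proof (intro ballI impI, rule ccontr)
    fix a b assume "a \<in> A" "b \<in> A" "xi_le n a b" "a \<noteq> b"
    with A xi_comparable_iff[of a n b] have "b = a + 1 \<or> a = b + 1 \<or> {a, b} = {1, 3}"
      unfolding xi_indep_def by blast
    then consider "b = a + 1" | "a = b + 1" | "{a, b} = {1, 3}" by blast
    then show False
    proof cases
      case 3
      have "{a, b} \<subseteq> A" using \<open>a \<in> A\<close> \<open>b \<in> A\<close> by blast
      with 3 A show False unfolding xi_indep_def by simp
    qed (use A \<open>a \<in> A\<close> \<open>b \<in> A\<close> in \<open>simp_all add: xi_indep_def\<close>)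
  qed
qed

lemma finite_poset_xi: "finite_poset {1..n} (xi_le n)"
proof
  show "xi_le n a c" if "xi_le n a b" "xi_le n b c" for a b c
    using that unfolding xi_le_def by simp
qed (simp_all add: xi_le_def xi_le_antisym)

section \<open>Counting the antichains of Xi_n\<close>

definition xi_indep_count :: "nat \<Rightarrow> nat \<Rightarrow> nat" where
  "xi_indep_count n j = card {A. xi_indep n A \<and> card A = j}"

lemma finite_xi_indep: "finite {A. xi_indep n A \<and> P A}"
  by (rule finite_subset[of _ "Pow {1..n}"]) (auto simp: xi_indep_def)

lemma finite_if_xi_indep: "xi_indep n A \<Longrightarrow> finite A"
  unfolding xi_indep_def using finite_subset by blast

lemma xi_indep_count_0: "xi_indep_count n 0 = 1"
proof -
  have "{A. xi_indep n A \<and> card A = 0} = {{}}"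
  proof (intro set_eqI iffI)
    fix A assume "A \<in> {A. xi_indep n A \<and> card A = 0}"
    then show "A \<in> {{}}" using finite_if_xi_indep by auto
  qed (simp add: xi_indep_def)
  then show ?thesis by (simp add: xi_indep_count_def)
qed

lemma xi_indep_le_3:
  assumes "n \<le> 3"
  shows "xi_indep n A \<longleftrightarrow> A \<subseteq> {1..n} \<and> card A \<le> 1"
proof
  assume A: "xi_indep n A"
  show "A \<subseteq> {1..n} \<and> card A \<le> 1"
  proof (rule ccontr)
    assume "\<not> ?thesis"
    with A obtain a b where "a \<in> A" "b \<in> A" "a < b"
      unfolding xi_indep_def
      by (metis card_le_Suc0_iff_eq finite_atLeastAtMost finite_subset linorder_neqE_nat One_nat_def)
    moreover from A \<open>a \<in> A\<close> \<open>b \<in> A\<close> have "a \<in> {1..n}" "b \<in> {1..n}"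
      unfolding xi_indep_def by blast+
    ultimately have "b = a + 1 \<or> (a = 1 \<and> b = 3)" using assms by auto
    then show False
    proof
      assume "a = 1 \<and> b = 3"
      with A \<open>a \<in> A\<close> \<open>b \<in> A\<close> show False unfolding xi_indep_def by simp
    qed (use A \<open>a \<in> A\<close> \<open>b \<in> A\<close> in \<open>simp add: xi_indep_def\<close>)
  qed
next
  assume A: "A \<subseteq> {1..n} \<and> card A \<le> 1"
  then have "finite A" using finite_subset by blast
  with A have single: "\<forall>a\<in>A. \<forall>b\<in>A. a = b" by (metis One_nat_def card_le_Suc0_iff_eq)
  have "(\<forall>a\<in>A. a + 1 \<notin> A) \<and> \<not> {1, 3} \<subseteq> A"
  proof (intro conjI ballI notI)
    fix a assume "a \<in> A" "a + 1 \<in> A"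
    with single have "a = a + 1" by blast
    then show False by simp
  next
    assume "{1, 3} \<subseteq> A"
    with single have "(1::nat) = 3" by blast
    then show False by simp
  qed
  with A show "xi_indep n A" unfolding xi_indep_def by blast
qed

lemma xi_indep_count_le_3:
  assumes "n \<le> 3"
  shows "xi_indep_count n j = (if j \<le> 1 then n choose j else 0)"
proof -
  have "{A. xi_indep n A \<and> card A = j} = (if j \<le> 1 then {A. A \<subseteq> {1..n} \<and> card A = j} else {})"
    using xi_indep_le_3[OF assms] by auto
  then show ?thesis by (simp add: xi_indep_count_def n_subsets)
qed

lemma xi_indep_Suc_if_notin:
  assumes "n + 1 \<notin> A"
  shows "xi_indep (n + 1) A \<longleftrightarrow> xi_indep n A"
proof -
  from assms have "A \<subseteq> {1..n + 1} \<longleftrightarrow> A \<subseteq> {1..n}" by (auto simp: subset_iff le_Suc_eq)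
  then show ?thesis unfolding xi_indep_def by simp
qed

lemma xi_indep_insert:
  assumes "2 \<le> n" "n + 2 \<notin> B"
  shows "xi_indep (n + 2) (insert (n + 2) B) \<longleftrightarrow> xi_indep n B"
proof
  assume A: "xi_indep (n + 2) (insert (n + 2) B)"
  then have "n + 1 \<notin> B" unfolding xi_indep_def by auto
  with A assms(2) have "B \<subseteq> {1..n}" unfolding xi_indep_def by (auto simp: subset_iff le_Suc_eq)
  with A show "xi_indep n B" unfolding xi_indep_def by blast
next
  assume B: "xi_indep n B"
  then have "B \<subseteq> {1..n}" unfolding xi_indep_def by blast
  then have "n + 1 \<notin> B" "n + 3 \<notin> B" by auto
  moreover have "n + 2 \<noteq> 1" "n + 2 \<noteq> 3" using assms(1) by simp_all
  ultimately show "xi_indep (n + 2) (insert (n + 2) B)"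
    using B \<open>B \<subseteq> {1..n}\<close> unfolding xi_indep_def by auto
qed

lemma xi_indep_not_above: "xi_indep n A \<Longrightarrow> n < m \<Longrightarrow> m \<notin> A"
  unfolding xi_indep_def by auto

lemma xi_indep_card_Suc_eq_Un:
  assumes "2 \<le> n"
  shows "{A. xi_indep (n + 2) A \<and> card A = Suc j}
    = {A. xi_indep (n + 1) A \<and> card A = Suc j} \<union> insert (n + 2) ` {B. xi_indep n B \<and> card B = j}"
    (is "?lhs = ?X \<union> insert (n + 2) ` ?Z")
proof (intro set_eqI iffI)
  fix A assume "A \<in> ?lhs"
  then have A: "xi_indep (n + 2) A" "card A = Suc j" by simp_all
  show "A \<in> ?X \<union> insert (n + 2) ` ?Z"
  proof (cases "n + 2 \<in> A")
    case False
    with A xi_indep_Suc_if_notin[of "n + 1" A] have "A \<in> ?X" by simp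
    then show ?thesis ..
  next
    case True
    define B where "B = A - {n + 2}"
    have B: "A = insert (n + 2) B" "n + 2 \<notin> B" using True by (auto simp: B_def)
    with A assms have "xi_indep n B" using xi_indep_insert by simp
    moreover have "card B = j" using A True finite_if_xi_indep by (simp add: B_def)
    ultimately have "B \<in> ?Z" by simp
    with B show ?thesis by blast
  qed
next
  fix A assume "A \<in> ?X \<union> insert (n + 2) ` ?Z"
  then show "A \<in> ?lhs"
  proof
    assume "A \<in> ?X"
    with xi_indep_not_above[of "n + 1" A "n + 2"] xi_indep_Suc_if_notin[of "n + 1" A] show ?thesis
      by simp
  next
    assume "A \<in> insert (n + 2) ` ?Z"
    then obtain B where B: "xi_indep n B" "card B = j" and A: "A = insert (n + 2) B" by blast
    moreover from B have "n + 2 \<notin> B" by (simp add: xi_indep_not_above)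
    ultimately have "xi_indep (n + 2) A" "card A = Suc j"
      using xi_indep_insert[OF assms] finite_if_xi_indep[of n B] by simp_all
    then show ?thesis by simp
  qed
qed

lemma xi_indep_count_Suc_Suc:
  assumes "2 \<le> n"
  shows "xi_indep_count (n + 2) (Suc j) = xi_indep_count (n + 1) (Suc j) + xi_indep_count n j"
proof -
  define X where "X = {A. xi_indep (n + 1) A \<and> card A = Suc j}"
  define Z where "Z = {B. xi_indep n B \<and> card B = j}"
  have "n + 2 \<notin> A" if "A \<in> X \<union> Z" for A
    using that xi_indep_not_above[of "n + 1" A "n + 2"] xi_indep_not_above[of n A "n + 2"]
    by (auto simp: X_def Z_def)
  then have "X \<inter> insert (n + 2) ` Z = {}" "inj_on (insert (n + 2)) Z"
    by (blast, meson UnCI inj_onI insert_ident)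
  moreover have "finite X" "finite Z" unfolding X_def Z_def by (rule finite_xi_indep)+
  ultimately have "card (X \<union> insert (n + 2) ` Z) = card X + card Z"
    by (simp add: card_Un_disjoint card_image)
  then show ?thesis
    by (simp only: xi_indep_count_def xi_indep_card_Suc_eq_Un[OF assms] flip: X_def Z_def)
qed

lemma binom_of_nat: "binom (int a) (int b) = a choose b"
  by (simp add: binom_def)

lemma Y_0_right: "Y m 0 = (if m = 0 then 2 else 1)"
  by (simp add: Y_def binom_def)

lemma Y_0_Suc: "Y 0 (Suc k) = 0"
  by (simp add: Y_def binom_def)

lemma Y_Suc_Suc_eq: "Y (Suc m) (Suc k) = (Suc m choose Suc k) + (m choose k)"
proof -
  have pred: "int (Suc m) - 1 = int m" "int (Suc k) - 1 = int k" by simp_all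
  show ?thesis unfolding Y_def pred binom_of_nat ..
qed

lemma Y_Suc_Suc: "Y (Suc m) (Suc k) = Y m (Suc k) + Y m k"
  by (cases m; cases k) (simp_all add: Y_Suc_Suc_eq Y_0_right Y_0_Suc)

lemma Y_eq_0: "m < k \<Longrightarrow> Y m k = 0"
  by (cases m; cases k) (simp_all add: Y_Suc_Suc_eq Y_0_Suc)

lemma Y_diagonal_rec: "Y (m + 2 - Suc i) (Suc i) = Y (m + 1 - Suc i) (Suc i) + Y (m - i) i"
proof (cases "i \<le> m")
  case True
  then have "m + 2 - Suc i = Suc (m - i)" "m + 1 - Suc i = m - i" by simp_all
  then show ?thesis by (simp add: Y_Suc_Suc)
qed (simp add: Y_eq_0)

lemma xi_indep_count_eq_Y_le_3:
  assumes "2 \<le> n" "n \<le> 3"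
  shows "xi_indep_count n j = Y (n - j) j"
proof -
  from assms have n: "n = 2 \<or> n = 3" by auto
  consider "j = 0" | "j = 1" | "2 \<le> j" by linarith
  then show ?thesis
  proof cases
    case 3
    with assms have "n - j < j" by simp
    with 3 assms show ?thesis by (simp add: xi_indep_count_le_3 Y_eq_0)
  qed (use n in \<open>auto simp: xi_indep_count_le_3 Y_def binom_def\<close>)
qed

lemma xi_indep_count_eq_Y:
  assumes "2 \<le> n"
  shows "xi_indep_count n j = Y (n - j) j"
  using assms
proof (induction n arbitrary: j rule: less_induct)
  case (less n)
  show ?case
  proof (cases "n \<le> 3")
    case True
    with less.prems show ?thesis by (rule xi_indep_count_eq_Y_le_3)
  next
    case False
    define m where "m = n - 2"
    with False have m: "n = m + 2" "2 \<le> m" by simp_all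
    show ?thesis
    proof (cases j)
      case 0
      with less.prems show ?thesis by (simp add: xi_indep_count_0 Y_0_right)
    next
      case (Suc i)
      have "xi_indep_count n j = xi_indep_count (m + 1) (Suc i) + xi_indep_count m i"
        using xi_indep_count_Suc_Suc[OF \<open>2 \<le> m\<close>] by (simp add: m Suc)
      also have "\<dots> = Y (m + 1 - Suc i) (Suc i) + Y (m - i) i"
        using less.IH[of "m + 1" "Suc i"] less.IH[of m i] m by simp
      also have "\<dots> = Y (n - j) j"
        by (simp only: m Suc Y_diagonal_rec)
      finally show ?thesis .
    qed
  qed
qed

section \<open>The cube polynomial of Omega_n\<close>

lemma induces_cube_eq_induced_cube: "induces_cube n k = induced_cube (filters n) k"
  by (simp add: fun_eq_iff induces_cube_def induced_cube_def)

lemma filters_eq_up_closed: "filters n = Collect (finite_poset.up_closed {1..n} (xi_le n))"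
  unfolding filters_def is_filter_def finite_poset.up_closed_def[OF finite_poset_xi] ..

lemma q_eq_sum_xi_indep_count: "q n k = (\<Sum>j\<le>n. xi_indep_count n j * (j choose k))"
proof -
  have "finite_poset.antichain {1..n} (xi_le n) = xi_indep n"
    unfolding fun_eq_iff finite_poset.antichain_def[OF finite_poset_xi] xi_antichain_iff_indep
    by simp
  then show ?thesis
    using finite_poset.card_induced_cubes_up_closed_antichains[OF finite_poset_xi, of n k]
    by (simp add: q_def induces_cube_eq_induced_cube filters_eq_up_closed xi_indep_count_def)
qed

lemma q_eq_sum_Y:
  assumes "2 \<le> n"
  shows "q n k = (\<Sum>j\<le>n div 2. Y (n - j) j * (j choose k))"
proof -
  have "q n k = (\<Sum>j\<le>n. Y (n - j) j * (j choose k))"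
    using assms by (simp add: q_eq_sum_xi_indep_count xi_indep_count_eq_Y)
  also have "\<dots> = (\<Sum>j\<le>n div 2. Y (n - j) j * (j choose k))"
    by (rule sum.mono_neutral_right) (auto simp: Y_eq_0)
  finally show ?thesis .
qed

lemma fps_nth_one_plus_X_power:
  "fps_nth ((1 + fps_X) ^ j :: 'a :: comm_semiring_1 fps) k = of_nat (j choose k)"
proof (induction j arbitrary: k)
  case (Suc j)
  have "(1 + fps_X :: 'a fps) ^ Suc j = (1 + fps_X) ^ j + fps_X * (1 + fps_X) ^ j"
    by (simp add: algebra_simps)
  then show ?case using Suc by (cases k) (simp_all add: add.commute)
qed (simp add: fps_one_nth binomial_eq_0)

theorem mainTheorem11:
  fixes n :: nat
  assumes "n \<ge> 2"
  shows "Qser n = (\<Sum>j\<le>n div 2. of_nat (Y (n - j) j) * (1 + fps_X) ^ j)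
       \<and> Qser n = (\<Sum>j\<le>n div 2. of_nat (binom (int (n - j)) (int j)
                                        + binom (int n - int j - 1) (int j - 1)) * (1 + fps_X) ^ j)"
proof
  show Q: "Qser n = (\<Sum>j\<le>n div 2. of_nat (Y (n - j) j) * (1 + fps_X) ^ j)"
    using assms by (simp add: fps_eq_iff Qser_def fps_sum_nth fps_nth_one_plus_X_power q_eq_sum_Y)
  have "Y (n - j) j = binom (int (n - j)) (int j) + binom (int n - int j - 1) (int j - 1)"
    if "j \<in> {..n div 2}" for j
    using that by (simp add: Y_def of_nat_diff)
  with Q show "Qser n = (\<Sum>j\<le>n div 2. of_nat (binom (int (n - j)) (int j)
                                        + binom (int n - int j - 1) (int j - 1)) * (1 + fps_X) ^ j)"
    by simp
qed

end
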